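(* The problems EE-NCL and EE-ANCL coincide: an NCL machine with two distinguished edges $e_a,e_b$ and target orientations for them is a yes-instance of EE-NCL if and only if it is a yes-instance of EE-ANCL.
   Context: An NCL machine is an undirected 3-connected 3-regular planar graph whose vertices are of two types, AND and OR; of the three edges incident to an AND vertex, one is designated its output edge and the other two its input edges. A legal configuration is an orientation of all edges such that (i) for each AND vertex, either its output edge is directed inward or both its input edges are directed inward, and (ii) for each OR vertex, at least one of its three incident edges is directed inward. A legal move reverses a single edge so that the resulting configuration is again legal. EE-NCL (Edge-to-Edge for NCL machines): given an NCL machine with two distinguished edges $e_a,e_b$ and a target orientation for each, decide whether there exist legal configurations $A$ and $B$ such that $e_a$ has its target orientation in $A$, $e_b$ has its target orientation in $B$, and some finite sequence of legal moves leads from $A$ to $B$ (edges may be reversed arbitrarily many times). EE-ANCL (asynchronous version): same input and question, except that moves are asynchronous in continuous time over a bounded timespan: any edge may start reversing at any time, and its reversal phase lasts some strictly positive amount of time (no two reversal phases of the same edge overlap, but different edges may be reversing simultaneously); while an edge is in its reversal phase its orientation is undefined and it is directed toward neither endpoint; at every time both vertex constraints (i) and (ii) must hold, counting only edges with defined orientation; and no edge is reversed infinitely many times in a bounded timespan. The question is whether one can go in this way from a legal configuration $A$ with $e_a$ in its target orientation to a configuration $B$ with $e_b$ in its target orientation. *)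

theory Defs
  imports "HOL-Analysis.Analysis"
begin

datatype vkind = AND | OR

text \<open>An NCL machine: vertex set, edge set (edges are identifiers with an ordered
pair of endpoints giving a reference direction), the type of each vertex, and for AND
vertices the designated output edge.\<close>

record ('v, 'e) ncl =
  verts :: "'v set"
  edges :: "'e set"
  ends  :: "'e \<Rightarrow> 'v \<times> 'v"
  kind  :: "'v \<Rightarrow> vkind"
  outp  :: "'v \<Rightarrow> 'e"

definition eset :: "('v, 'e) ncl \<Rightarrow> 'e \<Rightarrow> 'v set" where
  "eset M e = {fst (ends M e), snd (ends M e)}"

definition simple_graph :: "('v, 'e) ncl \<Rightarrow> bool" where
  "simple_graph M \<longleftrightarrow> finite (verts M) \<and> finite (edges M) \<and>
     (\<forall>e\<in>edges M. fst (ends M e) \<in> verts M \<and> snd (ends M e) \<in> verts M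
                    \<and> fst (ends M e) \<noteq> snd (ends M e)) \<and>
     (\<forall>e\<in>edges M. \<forall>e'\<in>edges M. eset M e = eset M e' \<longrightarrow> e = e')"

definition cubic :: "('v, 'e) ncl \<Rightarrow> bool" where
  "cubic M \<longleftrightarrow> (\<forall>v\<in>verts M. card {e\<in>edges M. v \<in> eset M e} = 3)"

definition adj_avoid :: "('v, 'e) ncl \<Rightarrow> 'v set \<Rightarrow> 'v \<Rightarrow> 'v \<Rightarrow> bool" where
  "adj_avoid M S u v \<longleftrightarrow> u \<notin> S \<and> v \<notin> S \<and> (\<exists>e\<in>edges M. eset M e = {u, v})"

definition connected_avoid :: "('v, 'e) ncl \<Rightarrow> 'v set \<Rightarrow> bool" where
  "connected_avoid M S \<longleftrightarrow>
     (\<forall>u\<in>verts M - S. \<forall>v\<in>verts M - S. (adj_avoid M S)\<^sup>*\<^sup>* u v)"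

definition three_connected :: "('v, 'e) ncl \<Rightarrow> bool" where
  "three_connected M \<longleftrightarrow> card (verts M) \<ge> 4 \<and>
     (\<forall>S. S \<subseteq> verts M \<and> card S \<le> 2 \<longrightarrow> connected_avoid M S)"

definition planar :: "('v, 'e) ncl \<Rightarrow> bool" where
  "planar M \<longleftrightarrow> (\<exists>(pos :: 'v \<Rightarrow> complex) (\<gamma> :: 'e \<Rightarrow> real \<Rightarrow> complex).
     inj_on pos (verts M) \<and>
     (\<forall>e\<in>edges M. arc (\<gamma> e) \<and> pathstart (\<gamma> e) = pos (fst (ends M e))
                   \<and> pathfinish (\<gamma> e) = pos (snd (ends M e))) \<and>
     (\<forall>e\<in>edges M. \<forall>e'\<in>edges M. e \<noteq> e' \<longrightarrow>
         path_image (\<gamma> e) \<inter> path_image (\<gamma> e') \<subseteq> pos ` (eset M e \<inter> eset M e')) \<and>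
     (\<forall>e\<in>edges M. \<forall>v\<in>verts M. pos v \<in> path_image (\<gamma> e) \<longrightarrow> v \<in> eset M e))"

definition ncl_machine :: "('v, 'e) ncl \<Rightarrow> bool" where
  "ncl_machine M \<longleftrightarrow> simple_graph M \<and> cubic M \<and> three_connected M \<and> planar M \<and>
     (\<forall>v\<in>verts M. kind M v = AND \<longrightarrow> outp M v \<in> edges M \<and> v \<in> eset M (outp M v))"

text \<open>An orientation of edge e is a boolean: True means directed from fst (ends e)
towards snd (ends e), False the reverse. A partial orientation maps an edge to None
while it is undefined (in its reversal phase).\<close>

definition head :: "('v, 'e) ncl \<Rightarrow> 'e \<Rightarrow> bool \<Rightarrow> 'v" where
  "head M e b = (if b then snd (ends M e) else fst (ends M e))"

definition inward :: "('v, 'e) ncl \<Rightarrow> ('e \<Rightarrow> bool option) \<Rightarrow> 'e \<Rightarrow> 'v \<Rightarrow> bool" where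
  "inward M p e v \<longleftrightarrow> e \<in> edges M \<and> (\<exists>b. p e = Some b \<and> head M e b = v)"

definition legal_at :: "('v, 'e) ncl \<Rightarrow> ('e \<Rightarrow> bool option) \<Rightarrow> 'v \<Rightarrow> bool" where
  "legal_at M p v \<longleftrightarrow>
     (case kind M v of
        AND \<Rightarrow> inward M p (outp M v) v \<or>
               (\<forall>e\<in>edges M. v \<in> eset M e \<and> e \<noteq> outp M v \<longrightarrow> inward M p e v)
      | OR \<Rightarrow> (\<exists>e\<in>edges M. v \<in> eset M e \<and> inward M p e v))"

definition legal_partial :: "('v, 'e) ncl \<Rightarrow> ('e \<Rightarrow> bool option) \<Rightarrow> bool" where
  "legal_partial M p \<longleftrightarrow> (\<forall>v\<in>verts M. legal_at M p v)"

definition legal :: "('v, 'e) ncl \<Rightarrow> ('e \<Rightarrow> bool) \<Rightarrow> bool" where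
  "legal M c \<longleftrightarrow> legal_partial M (\<lambda>e. Some (c e))"

definition legal_move :: "('v, 'e) ncl \<Rightarrow> ('e \<Rightarrow> bool) \<Rightarrow> ('e \<Rightarrow> bool) \<Rightarrow> bool" where
  "legal_move M c c' \<longleftrightarrow> legal M c \<and> legal M c' \<and> (\<exists>e\<in>edges M. c' = c(e := \<not> c e))"

definition EE_NCL :: "('v, 'e) ncl \<Rightarrow> 'e \<Rightarrow> bool \<Rightarrow> 'e \<Rightarrow> bool \<Rightarrow> bool" where
  "EE_NCL M ea ta eb tb \<longleftrightarrow>
     (\<exists>A B. legal M A \<and> legal M B \<and> A ea = ta \<and> B eb = tb \<and> (legal_move M)\<^sup>*\<^sup>* A B)"

text \<open>An asynchronous schedule over the timespan [0,T]: initial configuration A and,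
for each edge, a finite set R e of reversal phases, each an open time interval (s,f)
with 0 \<le> s < f \<le> T; phases of the same edge do not overlap.\<close>

definition async_cfg ::
  "('e \<Rightarrow> bool) \<Rightarrow> ('e \<Rightarrow> (real \<times> real) set) \<Rightarrow> real \<Rightarrow> 'e \<Rightarrow> bool option" where
  "async_cfg A R t e =
     (if \<exists>(s, f)\<in>R e. s < t \<and> t < f then None
      else Some (A e \<noteq> odd (card {(s, f)\<in>R e. f \<le> t})))"

definition valid_schedule ::
  "('v, 'e) ncl \<Rightarrow> real \<Rightarrow> ('e \<Rightarrow> bool) \<Rightarrow> ('e \<Rightarrow> (real \<times> real) set) \<Rightarrow> bool" where
  "valid_schedule M T A R \<longleftrightarrow> 0 \<le> T \<and>
     (\<forall>e. finite (R e)) \<and>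
     (\<forall>e. e \<notin> edges M \<longrightarrow> R e = {}) \<and>
     (\<forall>e. \<forall>(s, f)\<in>R e. 0 \<le> s \<and> s < f \<and> f \<le> T) \<and>
     (\<forall>e. \<forall>(s, f)\<in>R e. \<forall>(s', f')\<in>R e. (s, f) \<noteq> (s', f') \<longrightarrow> f \<le> s' \<or> f' \<le> s) \<and>
     (\<forall>t\<in>{0..T}. legal_partial M (async_cfg A R t))"

definition EE_ANCL :: "('v, 'e) ncl \<Rightarrow> 'e \<Rightarrow> bool \<Rightarrow> 'e \<Rightarrow> bool \<Rightarrow> bool" where
  "EE_ANCL M ea ta eb tb \<longleftrightarrow>
     (\<exists>T A R. valid_schedule M T A R \<and> legal M A \<and> A ea = ta \<and>
              async_cfg A R T eb = Some tb)"

end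

theory Submission
  imports Defs
begin

text \<open>A sequence of moves becomes an asynchronous schedule by letting the k-th move occupy the
time interval (k - 1, k): while the moving edge is undefined, every vertex still has all the
inward edges it had before the move or all those it has after it, so the partial configuration
stays legal. Conversely, the partial configuration at times close to t is less defined than the
one at t, and any two completions of a legal partial configuration are joined by legal moves,
flipping the undefined edges one at a time (each completion is legal). Hence reachability from A
of some completion of the configuration at time t is locally constant in t, and connectedness of
[0, T] carries it from time 0 to time T.\<close>

lemma inward_map_le: "p \<subseteq>\<^sub>m q \<Longrightarrow> inward M p e v \<Longrightarrow> inward M q e v"
  by (auto simp: inward_def map_le_def dom_def)

lemma legal_at_mono:
  "(\<And>e. inward M p e v \<Longrightarrow> inward M q e v) \<Longrightarrow> legal_at M p v \<Longrightarrow> legal_at M q v"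
  by (auto simp: legal_at_def split: vkind.splits)

lemma legal_partial_map_le: "legal_partial M p \<Longrightarrow> p \<subseteq>\<^sub>m q \<Longrightarrow> legal_partial M q"
  unfolding legal_partial_def by (blast intro: legal_at_mono inward_map_le)

lemma legal_completion: "legal_partial M p \<Longrightarrow> p \<subseteq>\<^sub>m (\<lambda>e. Some (c e)) \<Longrightarrow> legal M c"
  unfolding legal_def by (rule legal_partial_map_le)

lemma legal_move_flip_undefined:
  assumes "legal_partial M p" "p \<subseteq>\<^sub>m (\<lambda>x. Some (c x))" "e \<in> edges M" "p e = None"
  shows "legal_move M c (c(e := \<not> c e))"
proof -
  have "p \<subseteq>\<^sub>m (\<lambda>x. Some ((c(e := \<not> c e)) x))"
    using assms(2,4) by (auto simp: map_le_def)
  then show ?thesis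
    using assms by (auto simp: legal_move_def intro: legal_completion)
qed

lemma completions_connected:
  assumes lp: "legal_partial M p" and fin: "finite (edges M)" and outside: "- edges M \<subseteq> dom p"
    and c1: "p \<subseteq>\<^sub>m (\<lambda>e. Some (c1 e))" and c2: "p \<subseteq>\<^sub>m (\<lambda>e. Some (c2 e))"
  shows "(legal_move M)\<^sup>*\<^sup>* c1 c2"
  using c1
proof (induction "card {e. c1 e \<noteq> c2 e}" arbitrary: c1 rule: less_induct)
  case less
  have diff: "{e. c1 e \<noteq> c2 e} \<subseteq> edges M - dom p"
  proof
    fix e assume "e \<in> {e. c1 e \<noteq> c2 e}"
    then have "e \<notin> dom p" using less.prems c2 by (auto simp: map_le_def)
    then show "e \<in> edges M - dom p" using outside by blast
  qed
  show ?case
  proof (cases "c1 = c2")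
    case False
    then obtain e where e: "c1 e \<noteq> c2 e" by blast
    let ?c = "c1(e := c2 e)"
    have "?c = c1(e := \<not> c1 e)" using e by auto
    moreover have "e \<in> edges M" "p e = None" using diff e by auto
    ultimately have "legal_move M c1 ?c"
      using legal_move_flip_undefined[OF lp less.prems] by simp
    moreover have "{x. ?c x \<noteq> c2 x} \<subset> {x. c1 x \<noteq> c2 x}" using e by auto
    then have "card {x. ?c x \<noteq> c2 x} < card {x. c1 x \<noteq> c2 x}"
      using finite_subset[OF diff] fin by (simp add: psubset_card_mono)
    moreover have "p \<subseteq>\<^sub>m (\<lambda>x. Some (?c x))"
      using less.prems c2 by (auto simp: map_le_def)
    ultimately show ?thesis
      using less.hyps by (blast intro: converse_rtranclp_into_rtranclp)
  qed simp
qed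

definition reachable_completion :: "('v, 'e) ncl \<Rightarrow> ('e \<Rightarrow> bool) \<Rightarrow> ('e \<Rightarrow> bool option) \<Rightarrow> bool" where
  "reachable_completion M A p \<longleftrightarrow> (\<exists>c. p \<subseteq>\<^sub>m (\<lambda>e. Some (c e)) \<and> (legal_move M)\<^sup>*\<^sup>* A c)"

lemma reachable_completion_map_le_iff:
  assumes "legal_partial M q" "finite (edges M)" "- edges M \<subseteq> dom q" and "q \<subseteq>\<^sub>m p"
  shows "reachable_completion M A p \<longleftrightarrow> reachable_completion M A q"
proof
  assume "reachable_completion M A p"
  then show "reachable_completion M A q"
    using \<open>q \<subseteq>\<^sub>m p\<close> by (auto simp: reachable_completion_def intro: map_le_trans)
next
  assume "reachable_completion M A q"
  then obtain c' where c': "q \<subseteq>\<^sub>m (\<lambda>e. Some (c' e))" "(legal_move M)\<^sup>*\<^sup>* A c'"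
    by (auto simp: reachable_completion_def)
  define c where "c e = (case p e of Some b \<Rightarrow> b | None \<Rightarrow> c' e)" for e
  have c: "p \<subseteq>\<^sub>m (\<lambda>e. Some (c e))" by (auto simp: map_le_def c_def)
  have "(legal_move M)\<^sup>*\<^sup>* c' c"
    using completions_connected[OF assms(1-3) c'(1) map_le_trans[OF assms(4) c]] .
  with c c' show "reachable_completion M A p"
    by (auto simp: reachable_completion_def intro: rtranclp_trans)
qed

lemma async_cfg_no_phases: "R e = {} \<Longrightarrow> async_cfg A R t e = Some (A e)"
  by (simp add: async_cfg_def)

lemma async_cfg_before_phases:
  "\<forall>(s, f)\<in>R e. t \<le> s \<and> s < f \<Longrightarrow> async_cfg A R t e = Some (A e)"
proof -
  assume "\<forall>(s, f)\<in>R e. t \<le> s \<and> s < f"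
  then have "{(s, f)\<in>R e. f \<le> t} = {}" "\<not> (\<exists>(s, f)\<in>R e. s < t \<and> t < f)" by fastforce+
  then show ?thesis unfolding async_cfg_def by (simp only: if_False card.empty) simp
qed

lemma async_cfg_after_phases:
  "\<forall>(s, f)\<in>R e. f \<le> t \<Longrightarrow> async_cfg A R t e = Some (A e \<noteq> odd (card (R e)))"
proof -
  assume "\<forall>(s, f)\<in>R e. f \<le> t"
  then have "{(s, f)\<in>R e. f \<le> t} = R e" "\<not> (\<exists>(s, f)\<in>R e. s < t \<and> t < f)" by auto
  then show ?thesis by (simp add: async_cfg_def)
qed

lemma async_cfg_insert_later_phase:
  assumes "t \<le> s" "s < f"
  shows "async_cfg A (R(e := insert (s, f) (R e))) t = async_cfg A R t"
proof
  fix x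
  have "{(s', f')\<in>insert (s, f) (R e). f' \<le> t} = {(s', f')\<in>R e. f' \<le> t}" using assms by auto
  then show "async_cfg A (R(e := insert (s, f) (R e))) t x = async_cfg A R t x"
    using assms by (auto simp: async_cfg_def)
qed

text \<open>What the configuration at t' being less defined than the one at t requires of a single
phase (s, f).\<close>
definition phase_compatible :: "real \<Rightarrow> real \<Rightarrow> real \<Rightarrow> real \<Rightarrow> bool" where
  "phase_compatible t t' s f \<longleftrightarrow>
     (s < t \<and> t < f \<longrightarrow> s < t' \<and> t' < f) \<and> (\<not> (s < t' \<and> t' < f) \<longrightarrow> (f \<le> t' \<longleftrightarrow> f \<le> t))"

lemma eventually_phase_compatible:
  fixes s f t :: real
  assumes "s < f"
  shows "\<forall>\<^sub>F t' in at t within S. phase_compatible t t' s f"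
proof -
  have near: "\<forall>\<^sub>F t' in at t within S. (a < t \<longrightarrow> a < t') \<and> (t < a \<longrightarrow> t' < a)" for a :: real
  proof -
    have "\<forall>\<^sub>F t' in at t within S. a < t \<longrightarrow> a < t'"
      by (cases "a < t") (simp_all add: order_tendstoD(1)[OF tendsto_ident_at])
    moreover have "\<forall>\<^sub>F t' in at t within S. t < a \<longrightarrow> t' < a"
      by (cases "t < a") (simp_all add: order_tendstoD(2)[OF tendsto_ident_at])
    ultimately show ?thesis by (rule eventually_conj)
  qed
  show ?thesis
    using eventually_conj[OF near[of s] near[of f]]
    by (rule eventually_mono) (use assms in \<open>auto simp: phase_compatible_def\<close>)
qed

lemma async_cfg_map_le_if_compatible:
  assumes "\<forall>e. \<forall>(s, f)\<in>R e. phase_compatible t t' s f"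
  shows "async_cfg A R t' \<subseteq>\<^sub>m async_cfg A R t"
proof (rule map_le_def[THEN iffD2], intro ballI)
  fix e assume "e \<in> dom (async_cfg A R t')"
  then have outside: "\<not> (\<exists>(s, f)\<in>R e. s < t' \<and> t' < f)"
    by (auto simp: async_cfg_def split: if_splits)
  then have "\<not> (\<exists>(s, f)\<in>R e. s < t \<and> t < f)"
    and "{(s, f)\<in>R e. f \<le> t'} = {(s, f)\<in>R e. f \<le> t}"
    using assms by (fastforce simp: phase_compatible_def)+
  with outside show "async_cfg A R t' e = async_cfg A R t e" by (simp add: async_cfg_def)
qed

lemma async_cfg_eventually_map_le:
  assumes fin: "finite (\<Union>e. R e)" and phases: "\<forall>e. \<forall>(s, f)\<in>R e. s < f"
  shows "\<forall>\<^sub>F t' in at t within S. async_cfg A R t' \<subseteq>\<^sub>m async_cfg A R t"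
proof -
  have "\<forall>p\<in>(\<Union>e. R e). \<forall>\<^sub>F t' in at t within S. phase_compatible t t' (fst p) (snd p)"
    using phases by (fastforce intro: eventually_phase_compatible)
  then have "\<forall>\<^sub>F t' in at t within S. \<forall>p\<in>(\<Union>e. R e). phase_compatible t t' (fst p) (snd p)"
    by (rule eventually_ball_finite[OF fin])
  then show ?thesis
    by (rule eventually_mono) (intro async_cfg_map_le_if_compatible, fastforce)
qed

lemma reachable_completion_schedule_end:
  assumes vs: "valid_schedule M T A R" and fin: "finite (edges M)"
  shows "reachable_completion M A (async_cfg A R T)"
proof -
  have T_nonneg: "0 \<le> T" and phases: "\<forall>e. \<forall>(s, f)\<in>R e. 0 \<le> s \<and> s < f \<and> f \<le> T"
    and legal: "\<forall>t\<in>{0..T}. legal_partial M (async_cfg A R t)"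
    and no_phases_outside: "\<forall>e. e \<notin> edges M \<longrightarrow> R e = {}"
    using vs by (auto simp: valid_schedule_def)
  have "finite (\<Union>e. R e)"
  proof -
    have "(\<Union>e. R e) = (\<Union>e\<in>edges M. R e)" using no_phases_outside by auto
    then show ?thesis using vs fin by (simp add: valid_schedule_def)
  qed
  then have near: "\<forall>\<^sub>F t' in at t within {0..T}. async_cfg A R t' \<subseteq>\<^sub>m async_cfg A R t" for t
    using phases by (intro async_cfg_eventually_map_le) auto
  have dom: "- edges M \<subseteq> dom (async_cfg A R t)" for t
    using no_phases_outside by (auto simp: async_cfg_no_phases)
  have "\<forall>t\<in>{0..T}. \<forall>\<^sub>F t' in at t within {0..T}.
          reachable_completion M A (async_cfg A R t) = reachable_completion M A (async_cfg A R t')"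
  proof
    fix t
    have "\<forall>\<^sub>F t' in at t within {0..T}. t' \<in> {0..T}" by (simp add: eventually_at_filter)
    with near[of t] show "\<forall>\<^sub>F t' in at t within {0..T}.
          reachable_completion M A (async_cfg A R t) = reachable_completion M A (async_cfg A R t')"
      by (rule eventually_mono[OF eventually_conj])
        (intro reachable_completion_map_le_iff, use legal fin dom in auto)
  qed
  then have "reachable_completion M A (async_cfg A R 0) = reachable_completion M A (async_cfg A R T)"
    using T_nonneg by (intro connected_local_const[OF connected_Icc]) auto
  moreover have "async_cfg A R 0 = (\<lambda>e. Some (A e))"
    using phases by (intro ext async_cfg_before_phases) auto
  then have "reachable_completion M A (async_cfg A R 0)"
    unfolding reachable_completion_def by (metis map_le_refl rtranclp.rtrancl_refl)
  ultimately show ?thesis by simp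
qed

lemma legal_partial_during_move:
  assumes sg: "simple_graph M" and e: "e \<in> edges M"
    and lB: "legal M B" and lC: "legal M (B(e := \<not> B e))"
  shows "legal_partial M ((\<lambda>x. Some (B x))(e := None))"
  unfolding legal_partial_def
proof
  fix v assume v: "v \<in> verts M"
  have loop_free: "fst (ends M e) \<noteq> snd (ends M e)" using sg e by (simp add: simple_graph_def)
  show "legal_at M ((\<lambda>x. Some (B x))(e := None)) v"
  proof (cases "head M e (B e) = v")
    case True
    have "legal_at M (\<lambda>x. Some ((B(e := \<not> B e)) x)) v"
      using lC v by (simp add: legal_def legal_partial_def)
    then show ?thesis
      by (rule legal_at_mono[rotated])
        (use True loop_free in \<open>auto simp: inward_def head_def split: if_splits\<close>)
  next
    case False
    have "legal_at M (\<lambda>x. Some (B x)) v" using lB v by (simp add: legal_def legal_partial_def)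
    then show ?thesis
      by (rule legal_at_mono[rotated]) (use False in \<open>auto simp: inward_def\<close>)
  qed
qed

lemma async_cfg_during_appended_phase:
  assumes "\<forall>x. \<forall>(s, f)\<in>R x. f \<le> T" and "T < t" "t < T'"
  shows "async_cfg A (R(e := insert (T, T') (R e))) t = (async_cfg A R T)(e := None)"
proof
  fix x
  show "async_cfg A (R(e := insert (T, T') (R e))) t x = ((async_cfg A R T)(e := None)) x"
  proof (cases "x = e")
    case True
    then show ?thesis using assms(2,3) by (force simp: async_cfg_def)
  next
    case False
    have "\<forall>(s, f)\<in>R x. f \<le> T" "\<forall>(s, f)\<in>R x. f \<le> t" using assms(1,2) by fastforce+
    then show ?thesis using False by (simp add: async_cfg_after_phases)
  qed
qed

lemma async_cfg_after_appended_phase: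
  assumes "\<forall>x. \<forall>(s, f)\<in>R x. f \<le> T" and "finite (R e)" "T < T'"
  shows "async_cfg A (R(e := insert (T, T') (R e))) T' =
           (async_cfg A R T)(e := map_option Not (async_cfg A R T e))"
proof
  fix x
  let ?R = "R(e := insert (T, T') (R e))"
  have "\<forall>(s, f)\<in>R x. f \<le> T" using assms(1) by blast
  then have old: "async_cfg A R T x = Some (A x \<noteq> odd (card (R x)))"
    by (rule async_cfg_after_phases)
  have "\<forall>(s, f)\<in>?R x. f \<le> T'"
  proof (intro ballI, clarify)
    fix s f assume "(s, f) \<in> ?R x"
    then have "(s, f) = (T, T') \<or> (s, f) \<in> R x" by (auto split: if_splits)
    then show "f \<le> T'" using assms(1,3) by fastforce
  qed
  then have new: "async_cfg A ?R T' x = Some (A x \<noteq> odd (card (?R x)))"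
    by (rule async_cfg_after_phases)
  have "(T, T') \<notin> R e" using assms(1,3) by fastforce
  then have "card (?R e) = Suc (card (R e))" using assms(2) by simp
  then show "async_cfg A ?R T' x = ((async_cfg A R T)(e := map_option Not (async_cfg A R T e))) x"
    using old new by (cases "x = e") simp_all
qed

lemma valid_schedule_append_phase:
  assumes vs: "valid_schedule M T A R" and e: "e \<in> edges M" and "T < T'"
    and legal: "\<forall>t\<in>{T<..T'}. legal_partial M (async_cfg A (R(e := insert (T, T') (R e))) t)"
  shows "valid_schedule M T' A (R(e := insert (T, T') (R e)))"
  unfolding valid_schedule_def
proof (intro conjI allI)
  let ?R = "R(e := insert (T, T') (R e))"
  have mem: "(s, f) \<in> ?R x \<longleftrightarrow> x = e \<and> (s, f) = (T, T') \<or> (s, f) \<in> R x" for x s f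
    by auto
  have phase: "0 \<le> s \<and> s < f \<and> f \<le> T" if "(s, f) \<in> R x" for x s f
    using vs that by (auto simp: valid_schedule_def)
  have disjoint: "f \<le> s' \<or> f' \<le> s"
    if "(s, f) \<in> R x" "(s', f') \<in> R x" "(s, f) \<noteq> (s', f')" for x s f s' f'
  proof -
    have "\<forall>(s, f)\<in>R x. \<forall>(s', f')\<in>R x. (s, f) \<noteq> (s', f') \<longrightarrow> f \<le> s' \<or> f' \<le> s"
      using vs by (simp add: valid_schedule_def)
    then show ?thesis using that by fastforce
  qed
  fix x
  show "0 \<le> T'" using vs \<open>T < T'\<close> by (simp add: valid_schedule_def)
  show "finite (?R x)" using vs by (simp add: valid_schedule_def)
  show "x \<notin> edges M \<longrightarrow> ?R x = {}" using vs e by (simp add: valid_schedule_def)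
  show "\<forall>(s, f)\<in>?R x. 0 \<le> s \<and> s < f \<and> f \<le> T'"
  proof (intro ballI, clarify)
    fix s f assume "(s, f) \<in> ?R x"
    then have "(s, f) = (T, T') \<or> (s, f) \<in> R x" using mem by blast
    then show "0 \<le> s \<and> s < f \<and> f \<le> T'"
      using phase[of s f x] \<open>T < T'\<close> vs by (auto simp: valid_schedule_def)
  qed
  have "f \<le> s' \<or> f' \<le> s"
    if "(s, f) \<in> ?R x" "(s', f') \<in> ?R x" and ne: "(s, f) \<noteq> (s', f')" for s f s' f'
  proof -
    have "(s, f) \<in> R x \<and> (s', f') \<in> R x \<or> (s, f) = (T, T') \<and> (s', f') \<in> R x
            \<or> (s', f') = (T, T') \<and> (s, f) \<in> R x"
      using that mem[of s f x] mem[of s' f' x] by auto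
    then show ?thesis using disjoint[OF _ _ ne] phase by fastforce
  qed
  then show "\<forall>(s, f)\<in>?R x. \<forall>(s', f')\<in>?R x. (s, f) \<noteq> (s', f') \<longrightarrow> f \<le> s' \<or> f' \<le> s"
    by blast
  show "\<forall>t\<in>{0..T'}. legal_partial M (async_cfg A ?R t)"
  proof
    fix t assume t: "t \<in> {0..T'}"
    show "legal_partial M (async_cfg A ?R t)"
    proof (cases "t \<le> T")
      case True
      then have "async_cfg A ?R t = async_cfg A R t"
        using \<open>T < T'\<close> by (rule async_cfg_insert_later_phase)
      with t True vs show ?thesis by (simp add: valid_schedule_def)
    qed (use t legal in auto)
  qed
qed

lemma valid_schedule_append_move:
  assumes vs: "valid_schedule M T A R" and cur: "async_cfg A R T = (\<lambda>x. Some (B x))"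
    and mv: "legal_move M B C" and sg: "simple_graph M"
  shows "\<exists>R'. valid_schedule M (T + 1) A R' \<and> async_cfg A R' (T + 1) = (\<lambda>x. Some (C x))"
proof -
  obtain e where e: "e \<in> edges M" and C: "C = B(e := \<not> B e)" and lB: "legal M B" and lC: "legal M C"
    using mv by (auto simp: legal_move_def)
  have "\<forall>x. \<forall>(s, f)\<in>R x. 0 \<le> s \<and> s < f \<and> f \<le> T" and "finite (R e)"
    using vs by (simp_all add: valid_schedule_def)
  then have ends: "\<forall>x. \<forall>(s, f)\<in>R x. f \<le> T" by fast
  let ?R = "R(e := insert (T, T + 1) (R e))"
  have during: "async_cfg A ?R t = (\<lambda>x. Some (B x))(e := None)" if "T < t" "t < T + 1" for t
    using async_cfg_during_appended_phase[OF ends that] cur by simp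
  have after: "async_cfg A ?R (T + 1) = (\<lambda>x. Some (C x))"
    using async_cfg_after_appended_phase[OF ends \<open>finite (R e)\<close>, of "T + 1" A] cur C
    by (simp add: fun_eq_iff)
  have "legal_partial M (async_cfg A ?R t)" if "t \<in> {T<..T + 1}" for t
  proof (cases "t = T + 1")
    case True
    then show ?thesis using after lC by (simp add: legal_def)
  next
    case False
    with that have "async_cfg A ?R t = (\<lambda>x. Some (B x))(e := None)" by (intro during) auto
    then show ?thesis using legal_partial_during_move[OF sg e lB] lC C by simp
  qed
  then have "valid_schedule M (T + 1) A ?R"
    using valid_schedule_append_phase[OF vs e] by simp
  with after show ?thesis by blast
qed

lemma schedule_of_legal_moves:
  assumes "(legal_move M)\<^sup>*\<^sup>* A B" and "legal M A" and "simple_graph M"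
  shows "\<exists>T R. valid_schedule M T A R \<and> async_cfg A R T = (\<lambda>x. Some (B x))"
  using assms(1)
proof (induction rule: rtranclp_induct)
  case base
  have "async_cfg A (\<lambda>_. {}) t = (\<lambda>x. Some (A x))" for t by (simp add: fun_eq_iff async_cfg_no_phases)
  then have "valid_schedule M 0 A (\<lambda>_. {})" using \<open>legal M A\<close> by (simp add: valid_schedule_def legal_def)
  then show ?case using \<open>async_cfg A (\<lambda>_. {}) 0 = (\<lambda>x. Some (A x))\<close> by blast
next
  case (step B C)
  then show ?case using valid_schedule_append_move \<open>simple_graph M\<close> by blast
qed

theorem theorem1:
  fixes M :: "('v, 'e) ncl" and ea eb :: 'e and ta tb :: bool
  assumes "ncl_machine M" and "ea \<in> edges M" and "eb \<in> edges M"
  shows "EE_NCL M ea ta eb tb \<longleftrightarrow> EE_ANCL M ea ta eb tb"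
proof
  have sg: "simple_graph M" using assms(1) by (simp add: ncl_machine_def)
  then have fin: "finite (edges M)" by (simp add: simple_graph_def)
  {
    assume "EE_NCL M ea ta eb tb"
    then obtain A B where "legal M A" "A ea = ta" "B eb = tb" "(legal_move M)\<^sup>*\<^sup>* A B"
      unfolding EE_NCL_def by blast
    with schedule_of_legal_moves[OF _ _ sg] show "EE_ANCL M ea ta eb tb"
      unfolding EE_ANCL_def by fastforce
  }
  {
    assume "EE_ANCL M ea ta eb tb"
    then obtain T A R where vs: "valid_schedule M T A R" and "legal M A" "A ea = ta"
      and end_eb: "async_cfg A R T eb = Some tb"
      unfolding EE_ANCL_def by blast
    then obtain c where c: "async_cfg A R T \<subseteq>\<^sub>m (\<lambda>e. Some (c e))" "(legal_move M)\<^sup>*\<^sup>* A c"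
      using reachable_completion_schedule_end[OF vs fin] by (auto simp: reachable_completion_def)
    have "legal M c" using vs c(1) by (auto simp: valid_schedule_def intro: legal_completion)
    moreover have "c eb = tb" using c(1) end_eb by (force simp: map_le_def)
    ultimately show "EE_NCL M ea ta eb tb"
      unfolding EE_NCL_def using \<open>legal M A\<close> \<open>A ea = ta\<close> c(2) by blast
  }
qed

end
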